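(* Let $H$ be a $d\times d$ Hermitian matrix with eigendecomposition $H=U\,\mathrm{diag}(\mathbf{q})\,U^\dagger$, where $U$ is unitary and $\mathbf{q}\in\mathbb{R}^d$ lists the eigenvalues. Let $t\ge 1/d$. Then $$\max_{\rho\in S^t}\mathrm{Tr}(\rho H)=\max_{\mathbf{p}\in P(t)}\mathbf{p}\cdot\mathbf{q},$$ and if $\mathbf{p}^*$ is a maximizer of the right-hand side, then $\rho^*=U\,\mathrm{diag}(\mathbf{p}^* )\,U^\dagger$ is a maximizer of the left-hand side.
   Context: $S^t=\{\rho\in\mathcal{L}(\mathbb{C}^d):\rho\succeq 0,\ \mathrm{Tr}(\rho)=1,\ \mathrm{Tr}(\rho^2)\le t\}$ is the set of density operators of purity at most $t$. $P(t)=\{\mathbf{p}\in\mathbb{R}^d:\mathbf{p}\ge 0,\ \sum_i\mathbf{p}_i=1,\ \mathbf{p}\cdot\mathbf{p}\le t\}$. $\mathrm{diag}(\mathbf{a})$ is the diagonal matrix with diagonal $\mathbf{a}$. *)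

theory Defs
  imports "Jordan_Normal_Form.Matrix"
begin

definition adj :: "complex mat \<Rightarrow> complex mat" where
  "adj A = mat (dim_col A) (dim_row A) (\<lambda>(i,j). cnj (A $$ (j,i)))"

definition hermitian :: "complex mat \<Rightarrow> bool" where
  "hermitian A \<longleftrightarrow> A \<in> carrier_mat (dim_row A) (dim_row A) \<and> adj A = A"

definition unitary :: "nat \<Rightarrow> complex mat \<Rightarrow> bool" where
  "unitary d U \<longleftrightarrow> U \<in> carrier_mat d d \<and> adj U * U = 1\<^sub>m d \<and> U * adj U = 1\<^sub>m d"

definition psd :: "nat \<Rightarrow> complex mat \<Rightarrow> bool" where
  "psd d A \<longleftrightarrow> A \<in> carrier_mat d d \<and>
     (\<forall>v \<in> carrier_vec d. Im (\<Sum>i<d. cnj (v $ i) * (A *\<^sub>v v) $ i) = 0 \<and>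
                           0 \<le> Re (\<Sum>i<d. cnj (v $ i) * (A *\<^sub>v v) $ i))"

definition diagm :: "real vec \<Rightarrow> complex mat" where
  "diagm a = mat (dim_vec a) (dim_vec a) (\<lambda>(i,j). if i = j then complex_of_real (a $ i) else 0)"

definition trace :: "complex mat \<Rightarrow> complex" where
  "trace A = (\<Sum>i<dim_row A. A $$ (i,i))"

definition St :: "nat \<Rightarrow> real \<Rightarrow> complex mat set" where
  "St d t = {\<rho> \<in> carrier_mat d d. psd d \<rho> \<and> trace \<rho> = 1 \<and> Re (trace (\<rho> * \<rho>)) \<le> t}"

definition Pt :: "nat \<Rightarrow> real \<Rightarrow> real vec set" where
  "Pt d t = {p \<in> carrier_vec d. (\<forall>i<d. 0 \<le> p $ i) \<and> (\<Sum>i<d. p $ i) = 1 \<and> p \<bullet> p \<le> t}"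

end

(* Conjugating by U reduces everything to the eigenbasis of H: sigma = U^dagger rho U is again a
   density operator of the same purity, and Tr(rho H) = Tr(sigma diag(q)) = sum_i sigma_ii q_i
   depends only on the diagonal p of sigma. Because sigma is positive semidefinite, p is a
   probability vector and p . p <= sum_ik |sigma_ik|^2 = Tr(sigma^2) <= t, so p lies in P(t);
   conversely diag(p) lies in S^t for every p in P(t). Hence both objectives have the same set of
   values, and a maximiser over P(t) transfers to U diag(p) U^dagger. A maximiser over P(t) exists
   because P(t) is compact and, for t >= 1/d, contains the uniform distribution. *)

theory Submission
  imports Defs "HOL-Analysis.Function_Topology"
begin

lemma adj_carrier_mat: "A \<in> carrier_mat n m \<Longrightarrow> adj A \<in> carrier_mat m n"
  unfolding adj_def by auto

lemma adj_dim [simp]: "dim_row (adj A) = dim_col A" "dim_col (adj A) = dim_row A"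
  unfolding adj_def by auto

lemma index_adj [simp]: "i < dim_col A \<Longrightarrow> j < dim_row A \<Longrightarrow> adj A $$ (i, j) = cnj (A $$ (j, i))"
  unfolding adj_def by auto

lemma adj_adj [simp]: "adj (adj A) = A"
  by (rule eq_matI) auto

lemma trace_mult:
  "A \<in> carrier_mat n m \<Longrightarrow> B \<in> carrier_mat m n \<Longrightarrow>
   trace (A * B) = (\<Sum>i<n. \<Sum>k<m. A $$ (i, k) * B $$ (k, i))"
  unfolding trace_def by (auto intro!: sum.cong simp: atLeast0LessThan scalar_prod_def)

lemma trace_mult_comm:
  "A \<in> carrier_mat n m \<Longrightarrow> B \<in> carrier_mat m n \<Longrightarrow> trace (A * B) = trace (B * A)"
  by (simp add: trace_mult[of A n m B] trace_mult[of B m n A] sum.swap[of _ "{..<n}"] mult.commute)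

lemma unitary_carrier_mat:
  assumes "unitary d U" shows "U \<in> carrier_mat d d" "adj U \<in> carrier_mat d d"
  using assms adj_carrier_mat unfolding unitary_def by auto

lemma unitary_adj: "unitary d U \<Longrightarrow> unitary d (adj U)"
  using adj_carrier_mat unfolding unitary_def by auto

lemma unitary_conj_mult:
  assumes U: "unitary d U" and X: "X \<in> carrier_mat d d" and Y: "Y \<in> carrier_mat d d"
  shows "(U * X * adj U) * (U * Y * adj U) = U * (X * Y) * adj U"
proof -
  note carr = unitary_carrier_mat[OF U]
  have "(U * X * adj U) * (U * Y * adj U) = U * X * (adj U * U) * Y * adj U"
    using carr X Y by (simp add: assoc_mult_mat[of _ d d _ d _ d])
  also have "\<dots> = U * (X * Y) * adj U"
    using U carr X Y unfolding unitary_def by (simp add: assoc_mult_mat[of _ d d _ d _ d])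
  finally show ?thesis .
qed

lemma trace_unitary_conj:
  assumes U: "unitary d U" and X: "X \<in> carrier_mat d d"
  shows "trace (U * X * adj U) = trace X"
proof -
  note carr = unitary_carrier_mat[OF U]
  have "trace (U * X * adj U) = trace (adj U * (U * X))"
    using carr X by (intro trace_mult_comm) auto
  also have "\<dots> = trace X"
    using U carr X unfolding unitary_def by (simp add: assoc_mult_mat[of _ d d _ d _ d, symmetric])
  finally show ?thesis .
qed

lemma unitary_conj_adj_conj:
  assumes U: "unitary d U" and X: "X \<in> carrier_mat d d"
  shows "U * (adj U * X * U) * adj U = X"
proof -
  note carr = unitary_carrier_mat[OF U]
  have "U * (adj U * X * U) * adj U = (U * adj U) * X * (U * adj U)"
    using carr X by (simp add: assoc_mult_mat[of _ d d _ d _ d])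
  then show ?thesis
    using U X unfolding unitary_def by simp
qed

definition qform :: "complex mat \<Rightarrow> complex vec \<Rightarrow> complex" where
  "qform A v = (\<Sum>i<dim_vec v. cnj (v $ i) * (A *\<^sub>v v) $ i)"

lemma psd_iff_qform:
  "psd d A \<longleftrightarrow> A \<in> carrier_mat d d \<and> (\<forall>v \<in> carrier_vec d. Im (qform A v) = 0 \<and> 0 \<le> Re (qform A v))"
  unfolding psd_def qform_def by auto

lemma sum_cnj_mult_mat_vec:
  assumes U: "U \<in> carrier_mat n m" and v: "v \<in> carrier_vec n" and x: "x \<in> carrier_vec m"
  shows "(\<Sum>i<n. cnj (v $ i) * (U *\<^sub>v x) $ i) = (\<Sum>k<m. cnj ((adj U *\<^sub>v v) $ k) * x $ k)"
proof -
  have "(\<Sum>i<n. cnj (v $ i) * (U *\<^sub>v x) $ i) = (\<Sum>i<n. \<Sum>k<m. cnj (v $ i) * U $$ (i, k) * x $ k)"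
    using U v x by (auto simp: scalar_prod_def sum_distrib_left atLeast0LessThan mult.assoc intro!: sum.cong)
  also have "\<dots> = (\<Sum>k<m. \<Sum>i<n. cnj (v $ i) * U $$ (i, k) * x $ k)"
    by (rule sum.swap)
  also have "\<dots> = (\<Sum>k<m. cnj ((adj U *\<^sub>v v) $ k) * x $ k)"
    using U v x by (auto simp: scalar_prod_def sum_distrib_left atLeast0LessThan mult_ac intro!: sum.cong)
  finally show ?thesis .
qed

lemma qform_congruence:
  assumes A: "A \<in> carrier_mat d d" and V: "V \<in> carrier_mat d d" and v: "v \<in> carrier_vec d"
  shows "qform (adj V * A * V) v = qform A (V *\<^sub>v v)"
proof -
  have aV: "adj V \<in> carrier_mat d d" using V by (rule adj_carrier_mat)
  have "(adj V * A * V) *\<^sub>v v = adj V *\<^sub>v (A *\<^sub>v (V *\<^sub>v v))"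
    using A V aV v by (simp add: assoc_mult_mat_vec[of _ d d _ d])
  then show ?thesis
    using sum_cnj_mult_mat_vec[OF aV v, of "A *\<^sub>v (V *\<^sub>v v)"] A V v
    unfolding qform_def by simp
qed

lemma psd_congruence:
  assumes A: "psd d A" and V: "V \<in> carrier_mat d d"
  shows "psd d (adj V * A * V)"
proof -
  have Ac: "A \<in> carrier_mat d d" using A unfolding psd_iff_qform by blast
  show ?thesis
    using A V adj_carrier_mat[OF V] unfolding psd_iff_qform
    by (auto simp: qform_congruence[OF Ac V] intro!: mult_carrier_mat)
qed

lemma dim_diagm [simp]: "dim_row (diagm p) = dim_vec p" "dim_col (diagm p) = dim_vec p"
  unfolding diagm_def by auto

lemma diagm_carrier_mat [simp]: "p \<in> carrier_vec d \<Longrightarrow> diagm p \<in> carrier_mat d d"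
  unfolding diagm_def by auto

lemma index_diagm:
  "p \<in> carrier_vec d \<Longrightarrow> i < d \<Longrightarrow> j < d \<Longrightarrow>
   diagm p $$ (i, j) = (if i = j then complex_of_real (p $ i) else 0)"
  unfolding diagm_def by auto

lemma index_diagm_mult_vec:
  assumes p: "p \<in> carrier_vec d" and v: "v \<in> carrier_vec d" and i: "i < d"
  shows "(diagm p *\<^sub>v v) $ i = complex_of_real (p $ i) * v $ i"
proof -
  have "(diagm p *\<^sub>v v) $ i = (\<Sum>k<d. (if i = k then complex_of_real (p $ i) else 0) * v $ k)"
    using p v i by (auto simp: scalar_prod_def atLeast0LessThan index_diagm intro!: sum.cong)
  then show ?thesis
    using i by (simp add: if_distrib[of "\<lambda>x. x * _"] cong: if_cong)
qed

lemma qform_diagm: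
  assumes p: "p \<in> carrier_vec d" and v: "v \<in> carrier_vec d"
  shows "qform (diagm p) v = complex_of_real (\<Sum>i<d. p $ i * (cmod (v $ i))\<^sup>2)"
proof -
  have "cnj (v $ i) * (diagm p *\<^sub>v v) $ i = complex_of_real (p $ i * (cmod (v $ i))\<^sup>2)"
    if "i < d" for i
    using that by (simp add: index_diagm_mult_vec[OF p v] mult_ac flip: complex_norm_square)
  then show ?thesis
    using v unfolding qform_def by simp
qed

lemma psd_diagm:
  assumes p: "p \<in> carrier_vec d" and nonneg: "\<forall>i<d. 0 \<le> p $ i"
  shows "psd d (diagm p)"
  using p nonneg unfolding psd_iff_qform by (auto simp: qform_diagm intro!: sum_nonneg)

lemma trace_mult_diagm:
  assumes M: "M \<in> carrier_mat d d" and q: "q \<in> carrier_vec d"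
  shows "trace (M * diagm q) = (\<Sum>i<d. M $$ (i, i) * complex_of_real (q $ i))"
proof -
  have "trace (M * diagm q) = (\<Sum>i<d. \<Sum>k<d. M $$ (i, k) * diagm q $$ (k, i))"
    using M q by (simp add: trace_mult)
  also have "\<dots> = (\<Sum>i<d. M $$ (i, i) * complex_of_real (q $ i))"
    using q by (intro sum.cong refl) (simp add: index_diagm if_distrib cong: if_cong)
  finally show ?thesis .
qed

lemma trace_diagm: "q \<in> carrier_vec d \<Longrightarrow> trace (diagm q) = (\<Sum>i<d. complex_of_real (q $ i))"
  unfolding trace_def diagm_def by auto

lemma qform_unit_vec:
  assumes A: "A \<in> carrier_mat d d" and i: "i < d"
  shows "qform A (unit_vec d i) = A $$ (i, i)"
proof -
  have "(A *\<^sub>v unit_vec d i) $ k = A $$ (k, i)" if "k < d" for k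
    using A i that by (auto simp: scalar_prod_def atLeast0LessThan unit_vec_def
      if_distrib[of "\<lambda>x. _ * x"] cong: if_cong)
  then show ?thesis
    using i unfolding qform_def by (simp add: if_distrib[of cnj] if_distrib[of "\<lambda>x. x * _"] cong: if_cong)
qed

lemma sum_two_deltas:
  fixes f :: "nat \<Rightarrow> 'a::comm_ring_1"
  assumes "i < d" "j < d" "i \<noteq> j"
  shows "(\<Sum>l<d. f l * ((if l = i then a else 0) + (if l = j then b else 0))) = f i * a + f j * b"
  using assms by (simp add: distrib_left sum.distrib if_distrib[of "\<lambda>x. _ * x"] cong: if_cong)

lemma qform_two_entries:
  assumes A: "A \<in> carrier_mat d d" and ij: "i < d" "j < d" "i \<noteq> j"
  shows "qform A (vec d (\<lambda>l. (if l = i then a else 0) + (if l = j then b else 0)))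
     = (A $$ (i, i) * a + A $$ (i, j) * b) * cnj a + (A $$ (j, i) * a + A $$ (j, j) * b) * cnj b"
proof -
  let ?v = "vec d (\<lambda>l. (if l = i then a else 0) + (if l = j then b else 0))"
  have "(A *\<^sub>v ?v) $ k = A $$ (k, i) * a + A $$ (k, j) * b" if "k < d" for k
    using A that sum_two_deltas[OF ij, of "\<lambda>l. A $$ (k, l)"]
    by (auto simp: scalar_prod_def atLeast0LessThan intro!: sum.cong)
  then have "qform A ?v = (\<Sum>k<d. (A $$ (k, i) * a + A $$ (k, j) * b) *
      ((if k = i then cnj a else 0) + (if k = j then cnj b else 0)))"
    unfolding qform_def by (auto simp: mult.commute intro!: sum.cong)
  then show ?thesis
    using sum_two_deltas[OF ij] by simp
qed

lemma psd_diag_entry: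
  assumes A: "psd d A" and i: "i < d"
  shows "Im (A $$ (i, i)) = 0" "0 \<le> Re (A $$ (i, i))"
  using A qform_unit_vec[OF _ i, of A] unit_vec_carrier[of d i]
  unfolding psd_iff_qform by metis+

lemma psd_entry_cnj:
  assumes A: "psd d A" and i: "i < d" and j: "j < d"
  shows "A $$ (j, i) = cnj (A $$ (i, j))"
proof (cases "i = j")
  case True
  then show ?thesis using psd_diag_entry[OF A i] by (simp add: complex_eq_iff)
next
  case False
  have Ac: "A \<in> carrier_mat d d" using A unfolding psd_iff_qform by blast
  have "Im (qform A (vec d (\<lambda>l. (if l = i then 1 else 0) + (if l = j then b else 0)))) = 0" for b
    using A unfolding psd_iff_qform by auto
  from this[of 1] this[of \<i>] psd_diag_entry(1)[OF A i] psd_diag_entry(1)[OF A j]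
  show ?thesis
    by (simp add: qform_two_entries[OF Ac i j False] complex_eq_iff algebra_simps)
qed

lemma sum_diag_square_le_trace_square:
  assumes A: "psd d A"
  shows "(\<Sum>i<d. (Re (A $$ (i, i)))\<^sup>2) \<le> Re (trace (A * A))"
proof -
  have Ac: "A \<in> carrier_mat d d" using A unfolding psd_iff_qform by blast
  have "(\<Sum>i<d. (Re (A $$ (i, i)))\<^sup>2) \<le> (\<Sum>i<d. (cmod (A $$ (i, i)))\<^sup>2)"
    by (intro sum_mono) (metis abs_Re_le_cmod abs_ge_zero power2_abs power_mono)
  also have "\<dots> \<le> (\<Sum>i<d. \<Sum>k<d. (cmod (A $$ (i, k)))\<^sup>2)"
    by (intro sum_mono member_le_sum[where f = "\<lambda>k. (cmod (A $$ (_, k)))\<^sup>2"]) auto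
  also have "\<dots> = (\<Sum>i<d. \<Sum>k<d. Re (A $$ (i, k) * A $$ (k, i)))"
  proof (intro sum.cong refl)
    fix i k assume "i \<in> {..<d}" "k \<in> {..<d}"
    then have "A $$ (k, i) = cnj (A $$ (i, k))" by (intro psd_entry_cnj[OF A]) auto
    then show "(cmod (A $$ (i, k)))\<^sup>2 = Re (A $$ (i, k) * A $$ (k, i))"
      by (simp add: complex_mult_cnj cmod_power2)
  qed
  also have "\<dots> = Re (trace (A * A))"
    by (simp add: trace_mult[OF Ac Ac] Re_sum)
  finally show ?thesis .
qed

definition real_diag :: "complex mat \<Rightarrow> real vec" where
  "real_diag A = vec (dim_row A) (\<lambda>i. Re (A $$ (i, i)))"

lemma real_diag_carrier_vec: "A \<in> carrier_mat d d \<Longrightarrow> real_diag A \<in> carrier_vec d"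
  unfolding real_diag_def by auto

lemma real_diag_diagm [simp]: "real_diag (diagm p) = p"
  unfolding real_diag_def diagm_def by auto

lemma Re_trace_mult_diagm:
  assumes M: "M \<in> carrier_mat d d" and q: "q \<in> carrier_vec d"
  shows "Re (trace (M * diagm q)) = real_diag M \<bullet> q"
proof -
  have "trace (M * diagm q) = (\<Sum>i<d. M $$ (i, i) * complex_of_real (q $ i))"
    using M q by (rule trace_mult_diagm)
  then show ?thesis
    using M q by (simp add: Re_sum scalar_prod_def atLeast0LessThan real_diag_def)
qed

lemma St_unitary_conj:
  assumes U: "unitary d U" and rho: "\<rho> \<in> St d t"
  shows "U * \<rho> * adj U \<in> St d t"
proof -
  note carr = unitary_carrier_mat[OF U]
  have rc: "\<rho> \<in> carrier_mat d d" and psd: "psd d \<rho>" and tr: "trace \<rho> = 1"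
    and purity: "Re (trace (\<rho> * \<rho>)) \<le> t"
    using rho unfolding St_def by auto
  have "U * \<rho> * adj U \<in> carrier_mat d d"
    using carr rc by auto
  moreover have "psd d (U * \<rho> * adj U)"
    using psd_congruence[OF psd carr(2)] by simp
  moreover have "trace (U * \<rho> * adj U) = 1"
    using trace_unitary_conj[OF U rc] tr by (rule trans)
  moreover have "Re (trace ((U * \<rho> * adj U) * (U * \<rho> * adj U))) \<le> t"
    using purity U rc by (simp add: unitary_conj_mult trace_unitary_conj)
  ultimately show ?thesis
    unfolding St_def by blast
qed

lemma diagm_in_St:
  assumes p: "p \<in> Pt d t"
  shows "diagm p \<in> St d t"
proof -
  have pc: "p \<in> carrier_vec d" and "\<forall>i<d. 0 \<le> p $ i" "(\<Sum>i<d. p $ i) = 1" "p \<bullet> p \<le> t"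
    using p unfolding Pt_def by auto
  moreover have "trace (diagm p) = complex_of_real (\<Sum>i<d. p $ i)"
    using pc by (simp add: trace_diagm)
  moreover have "Re (trace (diagm p * diagm p)) = p \<bullet> p"
    using Re_trace_mult_diagm[OF diagm_carrier_mat[OF pc] pc] by simp
  ultimately show ?thesis
    unfolding St_def by (simp add: psd_diagm)
qed

lemma real_diag_in_Pt:
  assumes rho: "\<rho> \<in> St d t"
  shows "real_diag \<rho> \<in> Pt d t"
proof -
  have rc: "\<rho> \<in> carrier_mat d d" and psd: "psd d \<rho>" and tr: "trace \<rho> = 1"
    and purity: "Re (trace (\<rho> * \<rho>)) \<le> t"
    using rho unfolding St_def by auto
  have entry: "real_diag \<rho> $ i = Re (\<rho> $$ (i, i))" if "i < d" for i
    using rc that unfolding real_diag_def by simp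
  have "(\<Sum>i<d. real_diag \<rho> $ i) = Re (trace \<rho>)"
    using rc by (simp add: entry trace_def Re_sum)
  moreover have "real_diag \<rho> \<bullet> real_diag \<rho> = (\<Sum>i<d. (Re (\<rho> $$ (i, i)))\<^sup>2)"
    using rc by (simp add: real_diag_def scalar_prod_def atLeast0LessThan power2_eq_square)
  ultimately show ?thesis
    using sum_diag_square_le_trace_square[OF psd] purity tr psd_diag_entry(2)[OF psd]
      real_diag_carrier_vec[OF rc]
    unfolding Pt_def by (simp add: entry)
qed

lemma Re_trace_unitary_conj_diagm:
  assumes U: "unitary d U" and S: "\<sigma> \<in> carrier_mat d d" and q: "q \<in> carrier_vec d"
  shows "Re (trace ((U * \<sigma> * adj U) * (U * diagm q * adj U))) = real_diag \<sigma> \<bullet> q"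
  using U S q by (simp add: unitary_conj_mult trace_unitary_conj Re_trace_mult_diagm)

lemma Re_trace_image_St:
  assumes U: "unitary d U" and q: "q \<in> carrier_vec d"
  shows "(\<lambda>\<rho>. Re (trace (\<rho> * (U * diagm q * adj U)))) ` St d t = (\<lambda>p. p \<bullet> q) ` Pt d t"
proof (intro equalityI subsetI)
  fix x assume "x \<in> (\<lambda>\<rho>. Re (trace (\<rho> * (U * diagm q * adj U)))) ` St d t"
  then obtain \<rho> where rho: "\<rho> \<in> St d t" and x: "x = Re (trace (\<rho> * (U * diagm q * adj U)))"
    by blast
  define \<sigma> where "\<sigma> = adj U * \<rho> * U"
  have "\<sigma> \<in> St d t"
    using St_unitary_conj[OF unitary_adj[OF U] rho] unfolding \<sigma>_def by simp
  moreover have "\<rho> = U * \<sigma> * adj U"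
    using unitary_conj_adj_conj[OF U] rho unfolding \<sigma>_def St_def by simp
  ultimately have "x = real_diag \<sigma> \<bullet> q" and "real_diag \<sigma> \<in> Pt d t"
    using x Re_trace_unitary_conj_diagm[OF U _ q] real_diag_in_Pt unfolding St_def by auto
  then show "x \<in> (\<lambda>p. p \<bullet> q) ` Pt d t" by blast
next
  fix x assume "x \<in> (\<lambda>p. p \<bullet> q) ` Pt d t"
  then obtain p where p: "p \<in> Pt d t" and x: "x = p \<bullet> q" by blast
  have "U * diagm p * adj U \<in> St d t"
    using St_unitary_conj[OF U diagm_in_St[OF p]] .
  moreover have "x = Re (trace ((U * diagm p * adj U) * (U * diagm q * adj U)))"
    using x p Re_trace_unitary_conj_diagm[OF U _ q] unfolding Pt_def by simp
  ultimately show "x \<in> (\<lambda>\<rho>. Re (trace (\<rho> * (U * diagm q * adj U)))) ` St d t" by blast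
qed

text \<open>P(t) as a subset of the product space \<^typ>\<open>nat \<Rightarrow> real\<close> (coordinates from d on vanish),
  where Tychonoff's theorem provides compactness.\<close>
definition Pt_fun :: "nat \<Rightarrow> real \<Rightarrow> (nat \<Rightarrow> real) set" where
  "Pt_fun d t = {f. f \<in> (\<Pi>\<^sub>E i\<in>UNIV. if i < d then {0..1} else {0}) \<and>
                    (\<Sum>i<d. f i) = 1 \<and> (\<Sum>i<d. f i * f i) \<le> t}"

lemma compact_Pt_fun: "compact (Pt_fun d t)"
proof -
  have "compactin (product_topology (\<lambda>i. euclidean) UNIV)
      (\<Pi>\<^sub>E i\<in>UNIV. if i < d then {0..1::real} else {0})"
    by (subst compactin_PiE) (auto simp: compactin_euclidean_iff)
  then have box: "compact (\<Pi>\<^sub>E i\<in>UNIV. if i < d then {0..1::real} else {0})"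
    by (simp add: euclidean_product_topology compactin_euclidean_iff)
  have "closed {f :: nat \<Rightarrow> real. (\<Sum>i<d. f i) = 1}"
    by (intro closed_Collect_eq continuous_intros continuous_on_product_coordinates)
  moreover have "closed {f :: nat \<Rightarrow> real. (\<Sum>i<d. f i * f i) \<le> t}"
    by (intro closed_Collect_le continuous_intros continuous_on_product_coordinates)
  moreover have "Pt_fun d t = (\<Pi>\<^sub>E i\<in>UNIV. if i < d then {0..1} else {0}) \<inter>
      ({f. (\<Sum>i<d. f i) = 1} \<inter> {f. (\<Sum>i<d. f i * f i) \<le> t})"
    unfolding Pt_fun_def by blast
  ultimately show ?thesis
    using box by (simp add: closed_Int compact_Int_closed)
qed

lemma Pt_eq_vec_image: "Pt d t = vec d ` Pt_fun d t"
proof (intro equalityI subsetI)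
  fix p assume p: "p \<in> Pt d t"
  then have nonneg: "\<forall>i<d. 0 \<le> p $ i" and sum1: "(\<Sum>i<d. p $ i) = 1"
    unfolding Pt_def by auto
  have "p $ i \<le> 1" if "i < d" for i
    using member_le_sum[of i "{..<d}" "\<lambda>i. p $ i"] nonneg sum1 that by simp
  then have "(\<lambda>i. if i < d then p $ i else 0) \<in> Pt_fun d t"
    using p unfolding Pt_def Pt_fun_def by (auto simp: scalar_prod_def atLeast0LessThan)
  moreover have "p = vec d (\<lambda>i. if i < d then p $ i else 0)"
    using p unfolding Pt_def by auto
  ultimately show "p \<in> vec d ` Pt_fun d t" by blast
next
  fix p assume "p \<in> vec d ` Pt_fun d t"
  then obtain f where f: "f \<in> Pt_fun d t" and p: "p = vec d f" by blast
  have "0 \<le> f i" if "i < d" for i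
  proof -
    have "f i \<in> (if i < d then {0..1} else {0})"
      using f unfolding Pt_fun_def by blast
    then show ?thesis using that by simp
  qed
  then show "p \<in> Pt d t"
    using f p unfolding Pt_def Pt_fun_def by (simp add: scalar_prod_def atLeast0LessThan)
qed

lemma Pt_attains_max:
  assumes nonempty: "Pt d t \<noteq> {}" and q: "q \<in> carrier_vec d"
  shows "\<exists>p\<in>Pt d t. \<forall>p'\<in>Pt d t. p' \<bullet> q \<le> p \<bullet> q"
proof -
  have objective: "vec d f \<bullet> q = (\<Sum>i<d. f i * q $ i)" for f
    using q by (simp add: scalar_prod_def atLeast0LessThan)
  have "continuous_on UNIV (\<lambda>f. \<Sum>i<d. f i * q $ i)"
    by (intro continuous_intros continuous_on_product_coordinates)
  then have "continuous_on (Pt_fun d t) (\<lambda>f. \<Sum>i<d. f i * q $ i)"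
    by (rule continuous_on_subset) simp
  moreover have "Pt_fun d t \<noteq> {}"
    using nonempty Pt_eq_vec_image by auto
  ultimately obtain f where f: "f \<in> Pt_fun d t"
    and max: "\<forall>g\<in>Pt_fun d t. (\<Sum>i<d. g i * q $ i) \<le> (\<Sum>i<d. f i * q $ i)"
    using continuous_attains_sup[OF compact_Pt_fun] by blast
  show ?thesis
  proof (intro bexI ballI)
    show "vec d f \<in> Pt d t"
      using f Pt_eq_vec_image by blast
    fix p' assume "p' \<in> Pt d t"
    then obtain g where "g \<in> Pt_fun d t" and "p' = vec d g"
      using Pt_eq_vec_image by blast
    then show "p' \<bullet> q \<le> vec d f \<bullet> q"
      using max by (simp add: objective)
  qed
qed

lemma uniform_in_Pt:
  assumes "0 < d" and "1 / real d \<le> t"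
  shows "vec d (\<lambda>_. 1 / real d) \<in> Pt d t"
  using assms unfolding Pt_def by (simp add: scalar_prod_def)

theorem mainTheorem3:
  fixes d :: nat and H U :: "complex mat" and q :: "real vec" and t :: real
  assumes "0 < d"
    and "H \<in> carrier_mat d d" and "hermitian H"
    and "unitary d U"
    and "q \<in> carrier_vec d"
    and "H = U * diagm q * adj U"
    and "1 / real d \<le> t"
  shows "(\<exists>\<rho>\<in>St d t. \<forall>\<sigma>\<in>St d t. Re (trace (\<sigma> * H)) \<le> Re (trace (\<rho> * H)))
       \<and> (\<exists>p\<in>Pt d t. \<forall>p'\<in>Pt d t. p' \<bullet> q \<le> p \<bullet> q)
       \<and> (SUP \<rho>\<in>St d t. Re (trace (\<rho> * H))) = (SUP p\<in>Pt d t. p \<bullet> q)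
       \<and> (\<forall>ps\<in>Pt d t. (\<forall>p\<in>Pt d t. p \<bullet> q \<le> ps \<bullet> q) \<longrightarrow>
            U * diagm ps * adj U \<in> St d t \<and>
            (\<forall>\<rho>\<in>St d t. Re (trace (\<rho> * H)) \<le> Re (trace ((U * diagm ps * adj U) * H))))"
proof -
  have image: "(\<lambda>\<rho>. Re (trace (\<rho> * H))) ` St d t = (\<lambda>p. p \<bullet> q) ` Pt d t"
    using Re_trace_image_St[OF assms(4,5)] assms(6) by simp
  have lift: "U * diagm ps * adj U \<in> St d t \<and>
      (\<forall>\<rho>\<in>St d t. Re (trace (\<rho> * H)) \<le> Re (trace ((U * diagm ps * adj U) * H)))"
    if ps: "ps \<in> Pt d t" and ps_max: "\<forall>p\<in>Pt d t. p \<bullet> q \<le> ps \<bullet> q" for ps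
  proof -
    have "Re (trace ((U * diagm ps * adj U) * H)) = ps \<bullet> q"
      using Re_trace_unitary_conj_diagm[OF assms(4) _ assms(5)] ps assms(6)
      unfolding Pt_def by simp
    moreover have "Re (trace (\<rho> * H)) \<le> ps \<bullet> q" if "\<rho> \<in> St d t" for \<rho>
    proof -
      have "Re (trace (\<rho> * H)) \<in> (\<lambda>p. p \<bullet> q) ` Pt d t"
        using image that by blast
      then show ?thesis using ps_max by auto
    qed
    ultimately show ?thesis
      using St_unitary_conj[OF assms(4) diagm_in_St[OF ps]] by simp
  qed
  obtain p0 where p0: "p0 \<in> Pt d t" and p0_max: "\<forall>p\<in>Pt d t. p \<bullet> q \<le> p0 \<bullet> q"
    using Pt_attains_max[OF _ assms(5)] uniform_in_Pt[OF assms(1,7)] by blast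
  show ?thesis
    using lift[OF p0 p0_max] lift p0 p0_max image by auto
qed

end
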